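(* Let $\Omega \subset \mathbb{R}^N$ ($N \ge 3$) be a smooth bounded domain, $0<r<1$, $2+\frac4N<p<\frac{2N}{N-2}$, $\rho>0$, $\tau>0$, and suppose that for every $\varepsilon\in(0,1]$: $J_\varepsilon(u)>0$ for all $u\in S_\rho$ with $\|\nabla u\|_2=\tau$, and $c_\varepsilon:=\inf_{u\in K}J_\varepsilon(u)<0$, where $K=\{u\in S_\rho:\|\nabla u\|_2\le\tau\}$. Then for each $\varepsilon \in (0,1]$ there exists a sequence $\{u_n\} \subset K$ such that $J_\varepsilon(u_n) \to c_\varepsilon$, $\|\nabla u_n\|_2 < \tau$ for all $n$, and $\{u_n\}$ is bounded in $H_0^1(\Omega)$.
   Context: For $\rho>0$, $S_\rho = \{ u \in H_0^1(\Omega): u \ge 0 \text{ a.e.},\ \int_\Omega u^2\,dx = \rho \}$. For $\varepsilon>0$, \[ J_\varepsilon(u) = \frac12 \int_\Omega |\nabla u|^2\,dx - \frac{1}{1-r} \int_\Omega (u+\varepsilon)^{1-r}\,dx - \frac1p \int_\Omega u^p\,dx. \] *)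

theory Defs
  imports "HOL-Analysis.Analysis"
begin

fun dpart :: "'n::finite list \<Rightarrow> (real^'n \<Rightarrow> real) \<Rightarrow> (real^'n \<Rightarrow> real)" where
  "dpart [] f = f"
| "dpart (i # is) f = (\<lambda>x. frechet_derivative (dpart is f) (at x) (axis i 1))"

definition smooth_on :: "(real^'n::finite) set \<Rightarrow> (real^'n \<Rightarrow> real) \<Rightarrow> bool" where
  "smooth_on S f \<longleftrightarrow> open S \<and> (\<forall>is. \<forall>x\<in>S. dpart is f differentiable (at x))"

definition test_fun :: "(real^'n::finite) set \<Rightarrow> (real^'n \<Rightarrow> real) \<Rightarrow> bool" where
  "test_fun \<Omega> \<phi> \<longleftrightarrow> smooth_on UNIV \<phi> \<and> compact (closure {x. \<phi> x \<noteq> 0})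
      \<and> closure {x. \<phi> x \<noteq> 0} \<subseteq> \<Omega>"

definition smooth_bounded_domain :: "(real^'n::finite) set \<Rightarrow> bool" where
  "smooth_bounded_domain \<Omega> \<longleftrightarrow> open \<Omega> \<and> connected \<Omega> \<and> bounded \<Omega> \<and> \<Omega> \<noteq> {} \<and>
     (\<forall>x0\<in>frontier \<Omega>. \<exists>r>0. \<exists>\<psi>. smooth_on (ball x0 r) \<psi> \<and>
        (\<forall>x\<in>ball x0 r. frechet_derivative \<psi> (at x) \<noteq> (\<lambda>v. 0)) \<and>
        \<Omega> \<inter> ball x0 r = {x\<in>ball x0 r. \<psi> x < 0})"

definition L2_on :: "(real^'n::finite) set \<Rightarrow> (real^'n \<Rightarrow> real) \<Rightarrow> bool" where
  "L2_on \<Omega> u \<longleftrightarrow> u \<in> borel_measurable lebesgue \<and> set_integrable lebesgue \<Omega> (\<lambda>x. (u x)^2)"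

definition weak_grad :: "(real^'n::finite) set \<Rightarrow> (real^'n \<Rightarrow> real) \<Rightarrow> (real^'n \<Rightarrow> real^'n) \<Rightarrow> bool" where
  "weak_grad \<Omega> u g \<longleftrightarrow> (\<forall>\<phi> i. test_fun \<Omega> \<phi> \<longrightarrow>
      set_integrable lebesgue \<Omega> (\<lambda>x. u x * dpart [i] \<phi> x) \<and>
      set_integrable lebesgue \<Omega> (\<lambda>x. g x $ i * \<phi> x) \<and>
      (LINT x:\<Omega>|lebesgue. u x * dpart [i] \<phi> x) = - (LINT x:\<Omega>|lebesgue. g x $ i * \<phi> x))"

definition grad_of :: "(real^'n::finite) set \<Rightarrow> (real^'n \<Rightarrow> real) \<Rightarrow> (real^'n \<Rightarrow> real^'n)" where
  "grad_of \<Omega> u = (SOME g. weak_grad \<Omega> u g)"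

text \<open>H_0^1(Omega): closure of C_c^infinity(Omega) in the H^1 norm.\<close>
definition H01 :: "(real^'n::finite) set \<Rightarrow> (real^'n \<Rightarrow> real) set" where
  "H01 \<Omega> = {u. L2_on \<Omega> u \<and> (\<exists>g. weak_grad \<Omega> u g \<and> g \<in> borel_measurable lebesgue \<and>
      set_integrable lebesgue \<Omega> (\<lambda>x. (norm (g x))^2) \<and>
      (\<exists>\<phi>::nat \<Rightarrow> real^'n \<Rightarrow> real. (\<forall>k. test_fun \<Omega> (\<phi> k)) \<and>
         (\<lambda>k. LINT x:\<Omega>|lebesgue. (\<phi> k x - u x)^2 + (norm (\<chi> i. dpart [i] (\<phi> k) x - g x $ i))^2)
           \<longlonglongrightarrow> 0))}"

definition dirichlet :: "(real^'n::finite) set \<Rightarrow> (real^'n \<Rightarrow> real) \<Rightarrow> real" where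
  "dirichlet \<Omega> u = (LINT x:\<Omega>|lebesgue. (norm (grad_of \<Omega> u x))^2)"

definition grad_norm :: "(real^'n::finite) set \<Rightarrow> (real^'n \<Rightarrow> real) \<Rightarrow> real" where
  "grad_norm \<Omega> u = sqrt (dirichlet \<Omega> u)"

definition H1_norm :: "(real^'n::finite) set \<Rightarrow> (real^'n \<Rightarrow> real) \<Rightarrow> real" where
  "H1_norm \<Omega> u = sqrt ((LINT x:\<Omega>|lebesgue. (u x)^2) + dirichlet \<Omega> u)"

definition S_rho :: "(real^'n::finite) set \<Rightarrow> real \<Rightarrow> (real^'n \<Rightarrow> real) set" where
  "S_rho \<Omega> \<rho> = {u \<in> H01 \<Omega>. (AE x\<in>\<Omega> in lebesgue. u x \<ge> 0) \<and>
                             (LINT x:\<Omega>|lebesgue. (u x)^2) = \<rho>}"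

definition J_eps :: "(real^'n::finite) set \<Rightarrow> real \<Rightarrow> real \<Rightarrow> real \<Rightarrow> (real^'n \<Rightarrow> real) \<Rightarrow> real" where
  "J_eps \<Omega> r p \<epsilon> u = 1/2 * dirichlet \<Omega> u
      - 1/(1 - r) * (LINT x:\<Omega>|lebesgue. (u x + \<epsilon>) powr (1 - r))
      - 1/p * (LINT x:\<Omega>|lebesgue. (u x) powr p)"

definition K_set :: "(real^'n::finite) set \<Rightarrow> real \<Rightarrow> real \<Rightarrow> (real^'n \<Rightarrow> real) set" where
  "K_set \<Omega> \<rho> \<tau> = {u \<in> S_rho \<Omega> \<rho>. grad_norm \<Omega> u \<le> \<tau>}"

text \<open>c_eps = inf over K of J_eps, in the extended reals (inf of empty set = +infinity).\<close>
definition c_eps :: "(real^'n::finite) set \<Rightarrow> real \<Rightarrow> real \<Rightarrow> real \<Rightarrow> real \<Rightarrow> real \<Rightarrow> ereal" where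
  "c_eps \<Omega> r p \<rho> \<tau> \<epsilon> = (INF u\<in>K_set \<Omega> \<rho> \<tau>. ereal (J_eps \<Omega> r p \<epsilon> u))"

end

theory Submission
  imports Defs
begin

text \<open>Since \<open>c\<^sub>\<epsilon> < 0\<close>, a minimizing sequence can be chosen with negative energies. As
  \<open>J\<^sub>\<epsilon> > 0\<close> on the sphere \<open>\<parallel>\<nabla>u\<parallel>\<^sub>2 = \<tau>\<close>, it then lies in the interior of \<open>K\<close>.
  Boundedness in \<open>H\<^sub>0\<^sup>1\<close> is immediate: on \<open>K\<close>, \<open>\<parallel>u\<parallel>\<^sub>2\<^sup>2 = \<rho>\<close> and \<open>\<parallel>\<nabla>u\<parallel>\<^sub>2 \<le> \<tau>\<close>.\<close>

lemma minimizing_sequence_below: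
  fixes f :: "'a \<Rightarrow> 'b::{linorder_topology, first_countable_topology, complete_linorder}"
  assumes "(INF x\<in>A. f x) < c"
  shows "\<exists>x. (\<forall>n. x n \<in> A \<and> f (x n) < c) \<and> (\<lambda>n. f (x n)) \<longlonglongrightarrow> (INF x\<in>A. f x)"
proof -
  have "A \<noteq> {}"
    using assms by (cases "A = {}") simp_all
  then obtain v where v: "\<And>n. v n \<in> f ` A" and lim: "v \<longlonglongrightarrow> (INF x\<in>A. f x)"
    using Inf_as_limit[of "f ` A"] by auto
  have "\<forall>n. \<exists>x. x \<in> A \<and> v n = f x"
    using v by blast
  then obtain y where y: "\<And>n. y n \<in> A" "\<And>n. v n = f (y n)"
    by metis
  obtain N where N: "\<And>n. n \<ge> N \<Longrightarrow> v n < c"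
    using order_tendstoD(2)[OF lim assms] unfolding eventually_sequentially by blast
  have "y (n + N) \<in> A \<and> f (y (n + N)) < c" for n
    using y N[of "n + N"] by simp
  moreover have "(\<lambda>n. f (y (n + N))) \<longlonglongrightarrow> (INF x\<in>A. f x)"
    using LIMSEQ_ignore_initial_segment[OF lim, of N] y(2) by simp
  ultimately show ?thesis
    by (intro exI[of _ "\<lambda>n. y (n + N)"]) simp
qed

lemma H1_norm_K_set_bound:
  assumes "u \<in> K_set \<Omega> \<rho> \<tau>"
  shows "H1_norm \<Omega> u \<le> sqrt (\<rho> + \<tau>\<^sup>2)"
proof -
  have L2: "(LINT x:\<Omega>|lebesgue. (u x)\<^sup>2) = \<rho>" and grad: "sqrt (dirichlet \<Omega> u) \<le> \<tau>"
    using assms by (auto simp: K_set_def S_rho_def grad_norm_def)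
  have "dirichlet \<Omega> u \<le> \<tau>\<^sup>2"
    using grad by (rule sqrt_le_D)
  then show ?thesis
    unfolding H1_norm_def L2 by simp
qed

theorem lemma2p3:
  fixes \<Omega> :: "(real^'n::finite) set" and r p \<rho> \<tau> :: real
  assumes "CARD('n) \<ge> 3"
    and "smooth_bounded_domain \<Omega>"
    and "0 < r" "r < 1"
    and "2 + 4 / real CARD('n) < p" "p < 2 * real CARD('n) / (real CARD('n) - 2)"
    and "\<rho> > 0" "\<tau> > 0"
    and pos: "\<And>\<epsilon> u. 0 < \<epsilon> \<Longrightarrow> \<epsilon> \<le> 1 \<Longrightarrow> u \<in> S_rho \<Omega> \<rho> \<Longrightarrow> grad_norm \<Omega> u = \<tau> \<Longrightarrow>
              J_eps \<Omega> r p \<epsilon> u > 0"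
    and neg: "\<And>\<epsilon>. 0 < \<epsilon> \<Longrightarrow> \<epsilon> \<le> 1 \<Longrightarrow> c_eps \<Omega> r p \<rho> \<tau> \<epsilon> < 0"
  shows "\<forall>\<epsilon>. 0 < \<epsilon> \<and> \<epsilon> \<le> 1 \<longrightarrow>
          (\<exists>u :: nat \<Rightarrow> (real^'n \<Rightarrow> real).
             (\<forall>n. u n \<in> K_set \<Omega> \<rho> \<tau>) \<and>
             ((\<lambda>n. ereal (J_eps \<Omega> r p \<epsilon> (u n))) \<longlonglongrightarrow> c_eps \<Omega> r p \<rho> \<tau> \<epsilon>) \<and>
             (\<forall>n. grad_norm \<Omega> (u n) < \<tau>) \<and>
             (\<exists>B. \<forall>n. H1_norm \<Omega> (u n) \<le> B))"
proof (intro allI impI)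
  fix \<epsilon> :: real
  assume \<epsilon>: "0 < \<epsilon> \<and> \<epsilon> \<le> 1"
  obtain u where uK: "\<And>n. u n \<in> K_set \<Omega> \<rho> \<tau>"
    and J_neg: "\<And>n. ereal (J_eps \<Omega> r p \<epsilon> (u n)) < 0"
    and lim: "(\<lambda>n. ereal (J_eps \<Omega> r p \<epsilon> (u n))) \<longlonglongrightarrow> c_eps \<Omega> r p \<rho> \<tau> \<epsilon>"
    using minimizing_sequence_below[of "\<lambda>u. ereal (J_eps \<Omega> r p \<epsilon> u)" "K_set \<Omega> \<rho> \<tau>" 0]
      neg \<epsilon> unfolding c_eps_def by blast
  have interior: "grad_norm \<Omega> (u n) < \<tau>" for n
  proof -
    have S: "u n \<in> S_rho \<Omega> \<rho>" and le: "grad_norm \<Omega> (u n) \<le> \<tau>"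
      using uK[of n] by (auto simp: K_set_def)
    have "grad_norm \<Omega> (u n) \<noteq> \<tau>"
    proof
      assume "grad_norm \<Omega> (u n) = \<tau>"
      then have "J_eps \<Omega> r p \<epsilon> (u n) > 0"
        using \<epsilon> S by (intro pos) auto
      with J_neg[of n] show False
        by simp
    qed
    with le show ?thesis
      by simp
  qed
  show "\<exists>u. (\<forall>n. u n \<in> K_set \<Omega> \<rho> \<tau>) \<and>
             ((\<lambda>n. ereal (J_eps \<Omega> r p \<epsilon> (u n))) \<longlonglongrightarrow> c_eps \<Omega> r p \<rho> \<tau> \<epsilon>) \<and>
             (\<forall>n. grad_norm \<Omega> (u n) < \<tau>) \<and>
             (\<exists>B. \<forall>n. H1_norm \<Omega> (u n) \<le> B)"
    by (intro exI[of _ u] conjI allI exI[of _ "sqrt (\<rho> + \<tau>\<^sup>2)"])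
      (simp_all add: uK lim interior H1_norm_K_set_bound)
qed

end
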